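(* Let $G=(V,E)$ be a finite simple connected graph with at least one edge, let $s$ be a positive integer, and let $G_s=(V_s,E_s)$ be its $s$-th subdivision graph. Then $$4|E_s|\sum_{e_{ij}\in E_s} d_i d_j-\Big[\sum_{e_{ij}\in E_s}(d_i+d_j)\Big]^2=-\Big[\sum_{e_{uv}\in E}(d_u+d_v-4)\Big]^2,$$ where degrees on the left are taken in $G_s$ and degrees on the right in $G$.
   Context: The $s$-th subdivision graph $G_s$ of $G$ is obtained by inserting $s$ new vertices into each edge of $G$ (replacing each edge by a path with $s$ internal vertices). $d_u$ denotes degree; sums over edges count each edge once. *)

theory Defs
  imports Main
begin

definition simple_graph :: "'a set \<Rightarrow> 'a set set \<Rightarrow> bool" where
  "simple_graph V E \<longleftrightarrow> finite V \<and> (\<forall>e\<in>E. e \<subseteq> V \<and> card e = 2)"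

definition adj :: "'a set set \<Rightarrow> 'a \<Rightarrow> 'a \<Rightarrow> bool" where
  "adj E u v \<longleftrightarrow> {u, v} \<in> E"

definition connected_graph :: "'a set \<Rightarrow> 'a set set \<Rightarrow> bool" where
  "connected_graph V E \<longleftrightarrow> (\<forall>u\<in>V. \<forall>v\<in>V. (adj E)\<^sup>*\<^sup>* u v)"

definition degree :: "'a set set \<Rightarrow> 'a \<Rightarrow> nat" where
  "degree E v = card {e \<in> E. v \<in> e}"

text \<open>An (arbitrary but fixed) orientation of each edge, used to lay out the subdivision path.\<close>
definition end1 :: "'a set \<Rightarrow> 'a" where
  "end1 e = (SOME x. x \<in> e)"

definition end2 :: "'a set \<Rightarrow> 'a" where
  "end2 e = (THE y. y \<in> e \<and> y \<noteq> end1 e)"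

text \<open>The s-th subdivision graph: the old vertices are Inl v, the s new vertices on
  edge e are Inr (e,1), ..., Inr (e,s); each edge e = {u,v} is replaced by the path
  u, (e,1), ..., (e,s), v.\<close>
definition subdiv_verts :: "nat \<Rightarrow> 'a set \<Rightarrow> 'a set set \<Rightarrow> ('a + ('a set \<times> nat)) set" where
  "subdiv_verts s V E = Inl ` V \<union> {Inr (e, i) | e i. e \<in> E \<and> 1 \<le> i \<and> i \<le> s}"

definition subdiv_edges :: "nat \<Rightarrow> 'a set set \<Rightarrow> ('a + ('a set \<times> nat)) set set" where
  "subdiv_edges s E = (\<Union>e\<in>E.
      {{Inl (end1 e), Inr (e, 1)}, {Inr (e, s), Inl (end2 e)}}
      \<union> {{Inr (e, i), Inr (e, Suc i)} | i. 1 \<le> i \<and> i < s})"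

end

theory Submission imports Defs begin

text \<open>In \<open>G\<^sub>s\<close> every edge \<open>e = uv\<close> of \<open>G\<close> becomes a path of \<open>s + 1\<close> edges whose
  inner vertices have degree 2, while \<open>u\<close> and \<open>v\<close> keep their degrees. Writing \<open>m = |E|\<close>
  and \<open>A = \<Sum>\<^sub>u\<^sub>v (d\<^sub>u + d\<^sub>v)\<close>, the path of \<open>e\<close> contributes \<open>2 d\<^sub>u + 2 d\<^sub>v + 4 (s - 1)\<close> to
  \<open>\<Sum> d\<^sub>i d\<^sub>j\<close> and \<open>d\<^sub>u + d\<^sub>v + 4 s\<close> to \<open>\<Sum> (d\<^sub>i + d\<^sub>j)\<close>. Hence \<open>|E\<^sub>s| = (s + 1) m\<close>,
  \<open>\<Sum> d\<^sub>i d\<^sub>j = 2 A + 4 (s - 1) m\<close>, \<open>\<Sum> (d\<^sub>i + d\<^sub>j) = A + 4 s m\<close>, and the left-hand side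
  simplifies to \<open>-(A - 4 m)\<^sup>2\<close>.\<close>

lemma card_2_ends:
  assumes "card e = 2"
  shows "end1 e \<noteq> end2 e" "x \<in> e \<longleftrightarrow> x = end1 e \<or> x = end2 e"
proof -
  obtain a b where e: "e = {a, b}" "a \<noteq> b"
    using assms by (auto simp: card_2_iff)
  have end1: "end1 e \<in> e"
    unfolding end1_def using e(1) by (metis insertI1 someI)
  have "\<exists>!z. z \<in> e \<and> z \<noteq> end1 e"
    using e end1 by auto
  then have end2: "end2 e \<in> e \<and> end2 e \<noteq> end1 e"
    unfolding end2_def by (rule theI')
  show "end1 e \<noteq> end2 e"
    using end2 by metis
  show "x \<in> e \<longleftrightarrow> x = end1 e \<or> x = end2 e"
    using e end1 end2 by auto
qed

lemma sum_card_2_ends: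
  assumes "card e = 2"
  shows "sum f e = f (end1 e) + f (end2 e)"
proof -
  have e: "e = {end1 e, end2 e}"
    using card_2_ends(2)[OF assms] by blast
  have "sum f {end1 e, end2 e} = f (end1 e) + f (end2 e)"
    using card_2_ends(1)[OF assms] by simp
  then show ?thesis
    by (simp only: e[symmetric])
qed

definition subdiv_path :: "nat \<Rightarrow> 'a set \<Rightarrow> ('a + ('a set \<times> nat)) set set" where
  "subdiv_path s e = {{Inl (end1 e), Inr (e, 1)}, {Inr (e, s), Inl (end2 e)}}
      \<union> {{Inr (e, i), Inr (e, Suc i)} | i. 1 \<le> i \<and> i < s}"

lemma subdiv_edges_eq_UN_subdiv_path: "subdiv_edges s E = (\<Union>e\<in>E. subdiv_path s e)"
  unfolding subdiv_edges_def subdiv_path_def by simp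

lemma Inr_in_subdiv_path: "f \<in> subdiv_path s e \<Longrightarrow> Inr (e', i) \<in> f \<Longrightarrow> e' = e"
  unfolding subdiv_path_def by auto

lemma ex_Inr_in_subdiv_path: "f \<in> subdiv_path s e \<Longrightarrow> \<exists>i. Inr (e, i) \<in> f"
  unfolding subdiv_path_def by auto

lemma subdiv_path_disjoint: "e \<noteq> e' \<Longrightarrow> subdiv_path s e \<inter> subdiv_path s e' = {}"
  using ex_Inr_in_subdiv_path Inr_in_subdiv_path by blast

lemma subdiv_path_eq_insert_image:
  "subdiv_path s e = insert {Inl (end1 e), Inr (e, 1)} (insert {Inr (e, s), Inl (end2 e)}
     ((\<lambda>i. {Inr (e, i), Inr (e, Suc i)}) ` {1..<s}))"
  unfolding subdiv_path_def by auto

lemma finite_subdiv_path: "finite (subdiv_path s e)"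
  unfolding subdiv_path_eq_insert_image by simp

lemma sum_subdiv_path:
  assumes "card e = 2"
  shows "sum g (subdiv_path s e) = g {Inl (end1 e), Inr (e, 1)} + g {Inr (e, s), Inl (end2 e)}
     + (\<Sum>i\<in>{1..<s}. g {Inr (e, i), Inr (e, Suc i)})"
proof -
  let ?first = "{Inl (end1 e), Inr (e, 1)}" and ?last = "{Inr (e, s), Inl (end2 e)}"
  let ?inner = "\<lambda>i. {Inr (e, i), Inr (e, Suc i)} :: ('a + ('a set \<times> nat)) set"
  have "?first \<noteq> ?last"
    using card_2_ends(1)[OF assms] by (auto simp: doubleton_eq_iff)
  moreover have "?first \<notin> ?inner ` {1..<s}" "?last \<notin> ?inner ` {1..<s}"
    by auto
  moreover have "inj_on ?inner {1..<s}"
    by (auto simp: inj_on_def doubleton_eq_iff)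
  ultimately show ?thesis
    unfolding subdiv_path_eq_insert_image by (simp add: sum.reindex add.assoc)
qed

lemma card_subdiv_path: "card e = 2 \<Longrightarrow> s \<ge> 1 \<Longrightarrow> card (subdiv_path s e) = s + 1"
  using sum_subdiv_path[of e "\<lambda>_. 1::nat" s] by simp

lemma sum_subdiv_edges:
  "finite E \<Longrightarrow> sum g (subdiv_edges s E) = (\<Sum>e\<in>E. sum g (subdiv_path s e))"
  unfolding subdiv_edges_eq_UN_subdiv_path
  by (rule sum.UNION_disjoint) (auto simp: finite_subdiv_path subdiv_path_disjoint)

lemma card_subdiv_edges:
  assumes "finite E" "\<forall>e\<in>E. card e = 2" "s \<ge> 1"
  shows "card (subdiv_edges s E) = (s + 1) * card E"
  using sum_subdiv_edges[OF assms(1), of "\<lambda>_. 1::nat" s] assms(2,3)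
  by (simp add: card_subdiv_path)

definition subdiv_path_edge_at :: "nat \<Rightarrow> 'a \<Rightarrow> 'a set \<Rightarrow> ('a + ('a set \<times> nat)) set" where
  "subdiv_path_edge_at s v e =
     (if end1 e = v then {Inl (end1 e), Inr (e, 1)} else {Inr (e, s), Inl (end2 e)})"

lemma subdiv_path_edge_at_in_subdiv_path: "subdiv_path_edge_at s v e \<in> subdiv_path s e"
  unfolding subdiv_path_edge_at_def subdiv_path_def by simp

lemma inj_on_subdiv_path_edge_at: "inj_on (subdiv_path_edge_at s v) A"
proof (rule inj_onI)
  fix e e' assume eq: "subdiv_path_edge_at s v e = subdiv_path_edge_at s v e'"
  obtain k where "Inr (e, k) \<in> subdiv_path_edge_at s v e"
    unfolding subdiv_path_edge_at_def by (cases "end1 e = v") auto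
  then show "e = e'"
    using eq Inr_in_subdiv_path[OF subdiv_path_edge_at_in_subdiv_path] by metis
qed

lemma edges_at_Inl_subdiv:
  assumes "\<forall>e\<in>E. card e = 2"
  shows "{f \<in> subdiv_edges s E. Inl v \<in> f} = subdiv_path_edge_at s v ` {e \<in> E. v \<in> e}"
proof (intro equalityI subsetI)
  fix f assume "f \<in> {f \<in> subdiv_edges s E. Inl v \<in> f}"
  then have "f \<in> (\<Union>e\<in>E. subdiv_path s e)" and v: "Inl v \<in> f"
    by (simp_all add: subdiv_edges_eq_UN_subdiv_path)
  then obtain e where e: "e \<in> E" "f \<in> subdiv_path s e"
    by blast
  have two: "card e = 2"
    using assms e(1) by blast
  from e(2) consider "f = {Inl (end1 e), Inr (e, 1)}" | "f = {Inr (e, s), Inl (end2 e)}"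
    | i where "f = {Inr (e, i), Inr (e, Suc i)}"
    unfolding subdiv_path_def by blast
  then have "f = subdiv_path_edge_at s v e \<and> v \<in> e"
    using v card_2_ends[OF two] unfolding subdiv_path_edge_at_def by cases auto
  then show "f \<in> subdiv_path_edge_at s v ` {e \<in> E. v \<in> e}"
    using e(1) by blast
next
  fix f assume "f \<in> subdiv_path_edge_at s v ` {e \<in> E. v \<in> e}"
  then obtain e where e: "e \<in> E" "v \<in> e" and f: "f = subdiv_path_edge_at s v e"
    by blast
  have "card e = 2"
    using assms e(1) by blast
  then have "v = end1 e \<or> v = end2 e"
    using e(2) by (simp add: card_2_ends(2))
  then have "Inl v \<in> f"
    unfolding f subdiv_path_edge_at_def by auto
  moreover have "f \<in> subdiv_edges s E"
    unfolding f subdiv_edges_eq_UN_subdiv_path using e(1) subdiv_path_edge_at_in_subdiv_path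
    by (rule UN_I)
  ultimately show "f \<in> {f \<in> subdiv_edges s E. Inl v \<in> f}"
    by simp
qed

lemma degree_subdiv_Inl:
  "\<forall>e\<in>E. card e = 2 \<Longrightarrow> degree (subdiv_edges s E) (Inl v) = degree E v"
  unfolding degree_def by (simp add: edges_at_Inl_subdiv card_image inj_on_subdiv_path_edge_at)

lemma edges_at_Inr_subdiv_path:
  assumes "1 \<le> i" "i \<le> s"
  shows "{f \<in> subdiv_path s e. Inr (e, i) \<in> f} =
    {if i = 1 then {Inl (end1 e), Inr (e, 1)} else {Inr (e, i - 1), Inr (e, i)},
     if i = s then {Inr (e, s), Inl (end2 e)} else {Inr (e, i), Inr (e, Suc i)}}"
    (is "_ = {?before, ?after}")
proof (intro equalityI subsetI)
  fix f assume "f \<in> {f \<in> subdiv_path s e. Inr (e, i) \<in> f}"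
  then have f: "f \<in> subdiv_path s e" and i: "Inr (e, i) \<in> f"
    by simp_all
  from f consider "f = {Inl (end1 e), Inr (e, 1)}" | "f = {Inr (e, s), Inl (end2 e)}"
    | j where "f = {Inr (e, j), Inr (e, Suc j)}" "1 \<le> j" "j < s"
    unfolding subdiv_path_def by blast
  then show "f \<in> {?before, ?after}"
  proof cases
    case (3 j)
    with i have "i = j \<or> i = Suc j"
      by auto
    with 3 show ?thesis
      by auto
  qed (use i in auto)
next
  have "?before \<in> subdiv_path s e" "?after \<in> subdiv_path s e"
    unfolding subdiv_path_eq_insert_image using assms
    by (auto intro!: image_eqI[where x = "i - 1"])
  then show "f \<in> {f \<in> subdiv_path s e. Inr (e, i) \<in> f}" if "f \<in> {?before, ?after}" for f
    using that by auto
qed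

lemma degree_subdiv_Inr:
  assumes "\<forall>e\<in>E. card e = 2" "e \<in> E" "1 \<le> i" "i \<le> s"
  shows "degree (subdiv_edges s E) (Inr (e, i)) = 2"
proof -
  have "{f \<in> subdiv_edges s E. Inr (e, i) \<in> f} = {f \<in> subdiv_path s e. Inr (e, i) \<in> f}"
    using assms(2) Inr_in_subdiv_path unfolding subdiv_edges_eq_UN_subdiv_path by blast
  then show ?thesis
    using assms card_2_ends(1)[of e]
    unfolding degree_def edges_at_Inr_subdiv_path[OF assms(3,4)] by (auto simp: doubleton_eq_iff)
qed

lemma sum_prod_degree_subdiv_path:
  assumes two: "\<forall>e\<in>E. card e = 2" and e: "e \<in> E" and "s \<ge> 1"
  shows "(\<Sum>f\<in>subdiv_path s e. \<Prod>x\<in>f. int (degree (subdiv_edges s E) x))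
           = 2 * (\<Sum>x\<in>e. int (degree E x)) + 4 * (int s - 1)"
proof -
  have "card e = 2"
    using two e by blast
  then show ?thesis
    using assms
    by (simp add: sum_card_2_ends[of e] sum_subdiv_path degree_subdiv_Inl degree_subdiv_Inr
        of_nat_diff)
qed

lemma sum_sum_degree_subdiv_path:
  assumes two: "\<forall>e\<in>E. card e = 2" and e: "e \<in> E" and "s \<ge> 1"
  shows "(\<Sum>f\<in>subdiv_path s e. \<Sum>x\<in>f. int (degree (subdiv_edges s E) x))
           = (\<Sum>x\<in>e. int (degree E x)) + 4 * int s"
proof -
  have "card e = 2"
    using two e by blast
  then show ?thesis
    using assms
    by (simp add: sum_card_2_ends[of e] sum_subdiv_path degree_subdiv_Inl degree_subdiv_Inr
        of_nat_diff)
qed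

lemma subdivision_degree_identity:
  fixes A m s :: int
  shows "4 * ((s + 1) * m) * (2 * A + 4 * (s - 1) * m) - (A + 4 * s * m)\<^sup>2 = - ((A - 4 * m)\<^sup>2)"
  by (simp add: algebra_simps power2_eq_square)

theorem lemma3:
  fixes V :: "'a set" and E :: "'a set set" and s :: nat
  assumes "simple_graph V E" and "connected_graph V E" and "E \<noteq> {}" and "s \<ge> 1"
  defines "Es \<equiv> subdiv_edges s E"
  shows "4 * int (card Es) * (\<Sum>e\<in>Es. \<Prod>x\<in>e. int (degree Es x))
           - (\<Sum>e\<in>Es. \<Sum>x\<in>e. int (degree Es x))^2
         = - ((\<Sum>e\<in>E. (\<Sum>x\<in>e. int (degree E x)) - 4)^2)"
proof -
  have two: "\<forall>e\<in>E. card e = 2" and "E \<subseteq> Pow V" and "finite V"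
    using assms(1) unfolding simple_graph_def by auto
  then have fin: "finite E"
    by (meson finite_Pow_iff finite_subset)
  define A where "A = (\<Sum>e\<in>E. \<Sum>x\<in>e. int (degree E x))"
  define m where "m = int (card E)"
  have "int (card Es) = (int s + 1) * m"
    unfolding Es_def m_def using card_subdiv_edges[OF fin two assms(4)]
    by (simp add: algebra_simps)
  moreover have "(\<Sum>e\<in>Es. \<Prod>x\<in>e. int (degree Es x)) = 2 * A + 4 * (int s - 1) * m"
    unfolding Es_def A_def m_def using two assms(4)
    by (simp add: sum_subdiv_edges fin sum_prod_degree_subdiv_path sum.distrib sum_distrib_left)
  moreover have "(\<Sum>e\<in>Es. \<Sum>x\<in>e. int (degree Es x)) = A + 4 * int s * m"
    unfolding Es_def A_def m_def using two assms(4)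
    by (simp add: sum_subdiv_edges fin sum_sum_degree_subdiv_path sum.distrib sum_distrib_left)
  moreover have "(\<Sum>e\<in>E. (\<Sum>x\<in>e. int (degree E x)) - 4) = A - 4 * m"
    unfolding A_def m_def by (simp add: sum_subtractf)
  ultimately show ?thesis
    using subdivision_degree_identity[of "int s" m A] by simp
qed

end
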